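(* Let $n\ge2$, $A\in\mathbb{R}^{n\times n}$, $C\in\mathbb{R}^{1\times n}$ with $(C,A)$ observable, i.e. $\operatorname{rank}[C^T\ A^TC^T\ \cdots\ (A^{n-1})^TC^T]=n$. For a matrix $M\in\mathbb{R}^{r\times n}$ let $\mathrm{nul}(M)$ denote any $n\times d$ matrix whose columns span $\mathcal{N}(M)$, where $d=\dim\mathcal{N}(M)$. Define $X_0:=\mathrm{nul}(C)$ and, for $i=1,\ldots,n-2$, $X_i:=\mathrm{nul}\!\left(\begin{bmatrix} C\\ \mathrm{nul}((AX_{i-1})^T)^T\end{bmatrix}\right)$. Let $L_{\rm pre}:=AX_{n-2}$. Then $L_{\rm pre}$ is a nonzero vector in $\mathbb{R}^n$ (a single column) with $CL_{\rm pre}\neq0$, and $L:=AL_{\rm pre}/(CL_{\rm pre})\in\mathbb{R}^{n\times1}$ makes $A-LC$ nilpotent.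
   Context: $\mathcal{N}(M)$ denotes the null space of $M$. When $\mathcal{N}(M)=\{0\}$ the matrix $\mathrm{nul}(M)$ has zero columns. *)

theory Defs
  imports "Jordan_Normal_Form.DL_Rank" "Jordan_Normal_Form.Matrix_Kernel"
begin

definition is_nul :: "real mat \<Rightarrow> real mat \<Rightarrow> bool" where
  "is_nul M N \<longleftrightarrow> N \<in> carrier_mat (dim_col M) (kernel_dim M) \<and>
     LinearCombinations.module.span (class_ring :: real ring) (module_vec TYPE(real) (dim_col M)) (set (cols N)) = mat_kernel M"

definition obs_mat :: "nat \<Rightarrow> real mat \<Rightarrow> real mat \<Rightarrow> real mat" where
  "obs_mat n C A = mat_of_cols n
     (map (\<lambda>j. col (transpose_mat (A ^\<^sub>m j) * transpose_mat C) 0) [0..<n])"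

definition nilpotent_mat :: "real mat \<Rightarrow> bool" where
  "nilpotent_mat M \<longleftrightarrow> (\<exists>k. M ^\<^sub>m k = 0\<^sub>m (dim_row M) (dim_col M))"

end

theory Submission
  imports Defs
begin

(* Write c for the single row of C and call
     U_k = {u. c . A^j u = 0 for all j < k}
   the vectors whose first k outputs vanish.  Three facts drive the proof.
   (1) The column spaces of the nul-matrices are  span X_i = A^i (U_(i+1)).
       The induction step rests on  ker (nul(B^T)^T) = range B  (column space
       equals the orthogonal complement of the left kernel, proved through an
       orthogonal decomposition) and on  ker [C; M] = ker C \<inter> ker M.
   (2) Observability makes U_n trivial.  U_(n-1) is cut out by n-1 linear
       conditions, hence nonzero, and one more condition kills it, so it is a
       line spanned by some x0 with  gamma = c . A^(n-1) x0 \<noteq> 0.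
       Hence span X_(n-2) is the line through A^(n-2) x0, so X_(n-2) is a single
       column t A^(n-2) x0 with t \<noteq> 0, L_pre = t A^(n-1) x0 and C L_pre = t gamma.
   (3) The resulting F = A - L C maps the Krylov vectors e_j = A^j x0 by
       e_j |-> e_(j+1) (j < n-1) and e_(n-1) |-> 0; these n vectors form a basis,
       so F^n = 0.
   The file follows this order: matrix/vector basics, spans and orthogonality,
   null-space matrices, the spaces U_k, the Krylov nilpotency argument, and
   finally the main theorem. *)

abbreviation vspan :: "nat \<Rightarrow> real vec set \<Rightarrow> real vec set" where
  "vspan n S \<equiv> LinearCombinations.module.span (class_ring :: real ring) (module_vec TYPE(real) n) S"

lemma pow_mat_Suc_left:
  assumes "A \<in> carrier_mat n n"
  shows "A ^\<^sub>m Suc k = A * A ^\<^sub>m k"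
proof (induct k)
  case 0 then show ?case using assms by simp
next
  case (Suc k)
  have "A ^\<^sub>m Suc (Suc k) = (A * A ^\<^sub>m k) * A" using Suc by simp
  also have "\<dots> = A * (A ^\<^sub>m k * A)" using assms by (intro assoc_mult_mat) auto
  finally show ?case by simp
qed

lemma pow_mat_mult_vec_carrier [simp]:
  "A \<in> carrier_mat n n \<Longrightarrow> (A ^\<^sub>m k) *\<^sub>v u \<in> carrier_vec n"
  by (metis carrier_vec_dim_vec dim_mult_mat_vec pow_mat_dim_square(1))

lemma pow_mat_mult_vec_Suc:
  fixes A :: "real mat"
  assumes A: "A \<in> carrier_mat n n" and u: "u \<in> carrier_vec n"
  shows "(A ^\<^sub>m Suc k) *\<^sub>v u = A *\<^sub>v ((A ^\<^sub>m k) *\<^sub>v u)"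
  unfolding pow_mat_Suc_left[OF A] using A u by (intro assoc_mult_mat_vec) auto

lemma pow_mat_mult_vec_add:
  fixes A :: "real mat"
  assumes A: "A \<in> carrier_mat n n" and u: "u \<in> carrier_vec n"
  shows "(A ^\<^sub>m (p + q)) *\<^sub>v u = (A ^\<^sub>m p) *\<^sub>v ((A ^\<^sub>m q) *\<^sub>v u)"
proof (induct p)
  case 0 then show ?case using A u by simp
next
  case (Suc p)
  then show ?case
    using pow_mat_mult_vec_Suc[OF A u, of "p + q"] pow_mat_mult_vec_Suc[OF A, of "(A ^\<^sub>m q) *\<^sub>v u" p] A
    by simp
qed

lemma scalar_prod_self_eq_0:
  fixes r :: "real vec"
  assumes "r \<in> carrier_vec n" "r \<bullet> r = 0"
  shows "r = 0\<^sub>v n"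
proof -
  have "(\<Sum>i\<in>{0..<n}. r $ i * r $ i) = 0" using assms unfolding scalar_prod_def by simp
  then have "\<forall>i\<in>{0..<n}. r $ i * r $ i = 0"
    by (subst sum_nonneg_eq_0_iff[symmetric]) auto
  then show ?thesis using assms by (intro eq_vecI) auto
qed

lemma span_cols_eq_range:
  fixes N :: "real mat"
  assumes N: "N \<in> carrier_mat n k"
  shows "vspan n (set (cols N)) = {N *\<^sub>v z | z. z \<in> carrier_vec k}"
proof -
  interpret V: vec_space "TYPE(real)" n .
  have cs: "set (cols N) \<subseteq> carrier_vec n" using N cols_dim by blast
  have dims: "\<forall>w\<in>set (cols N). dim_vec w = n" using cs by auto
  have N_cols: "mat_of_cols n (cols N) = N" and len: "length (cols N) = k"
    using N mat_of_cols_cols[of N] by simp_all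
  have lincomb: "V.lincomb_list f (cols N) = N *\<^sub>v vec k f" for f
    using V.lincomb_list_as_mat_mult[OF dims, of f] N_cols len by simp
  have "vspan n (set (cols N)) = V.span_list (cols N)" using V.span_list_as_span[OF cs] by simp
  also have "\<dots> = {N *\<^sub>v z | z. z \<in> carrier_vec k}"
  proof (intro equalityI subsetI)
    fix x assume "x \<in> V.span_list (cols N)"
    then obtain f where "x = V.lincomb_list f (cols N)" by (rule V.in_span_listE)
    then have "x = N *\<^sub>v vec k f" by (simp only: lincomb)
    then show "x \<in> {N *\<^sub>v z | z. z \<in> carrier_vec k}" using vec_carrier[of k f] by (intro CollectI exI[of _ "vec k f"] conjI)
  next
    fix x assume "x \<in> {N *\<^sub>v z | z. z \<in> carrier_vec k}"
    then obtain z where "x = N *\<^sub>v z" and z: "z \<in> carrier_vec k" by blast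
    moreover have "vec k (\<lambda>i. z $ i) = z" using z by auto
    ultimately have "x = V.lincomb_list (\<lambda>i. z $ i) (cols N)" using lincomb[of "\<lambda>i. z $ i"] by simp
    then show "x \<in> V.span_list (cols N)" by (intro V.in_span_listI) auto
  qed
  finally show ?thesis .
qed

lemma single_col_mult_vec:
  fixes L :: "real mat"
  assumes L: "L \<in> carrier_mat n 1" and z: "z \<in> carrier_vec 1"
  shows "L *\<^sub>v z = (z $ 0) \<cdot>\<^sub>v col L 0"
proof (rule eq_vecI)
  fix i assume "i < dim_vec ((z $ 0) \<cdot>\<^sub>v col L 0)"
  then have i: "i < n" using L by simp
  have "(L *\<^sub>v z) $ i = (\<Sum>j\<in>{0..<1}. L $$ (i, j) * z $ j)"
    using L z i by (simp add: scalar_prod_def)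
  then show "(L *\<^sub>v z) $ i = ((z $ 0) \<cdot>\<^sub>v col L 0) $ i" using L i by simp
qed (use L in simp)

lemma span_single:
  fixes v :: "real vec"
  assumes v: "v \<in> carrier_vec n"
  shows "vspan n {v} = {a \<cdot>\<^sub>v v | a. True}"
proof -
  let ?V = "mat_of_cols n [v]"
  have V: "?V \<in> carrier_mat n 1" using mat_of_cols_carrier(1)[of n "[v]"] by simp
  have cs: "set (cols ?V) = {v}" using v by simp
  have col: "col ?V 0 = v" using col_mat_of_cols[of 0 "[v]" n] v by simp
  have "vspan n {v} = {?V *\<^sub>v z | z. z \<in> carrier_vec 1}" using span_cols_eq_range[OF V] cs by simp
  also have "\<dots> = {a \<cdot>\<^sub>v v | a. True}"
  proof (intro equalityI subsetI)
    fix x assume "x \<in> {?V *\<^sub>v z | z. z \<in> carrier_vec 1}"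
    then obtain z where "x = ?V *\<^sub>v z" "z \<in> carrier_vec 1" by blast
    then have "x = (z $ 0) \<cdot>\<^sub>v v" using single_col_mult_vec[OF V] col by simp
    then show "x \<in> {a \<cdot>\<^sub>v v | a. True}" by blast
  next
    fix x assume "x \<in> {a \<cdot>\<^sub>v v | a. True}"
    then obtain a where "x = a \<cdot>\<^sub>v v" by blast
    then have "x = ?V *\<^sub>v vec 1 (\<lambda>_. a)" using single_col_mult_vec[OF V, of "vec 1 (\<lambda>_. a)"] col by simp
    then show "x \<in> {?V *\<^sub>v z | z. z \<in> carrier_vec 1}"
      using vec_carrier[of 1 "\<lambda>_. a"] by (intro CollectI exI[of _ "vec 1 (\<lambda>_. a)"] conjI)
  qed
  finally show ?thesis .
qed

lemma orthogonal_to_span: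
  fixes S :: "real vec set"
  assumes S: "S \<subseteq> carrier_vec n" and y: "y \<in> carrier_vec n" "\<forall>u\<in>S. y \<bullet> u = 0"
    and v: "v \<in> vspan n S"
  shows "y \<bullet> v = 0"
proof -
  interpret V: vec_space "TYPE(real)" n .
  have "y \<in> V.orthogonal_complement S" using y unfolding V.orthogonal_complement_def by auto
  then have "y \<in> V.orthogonal_complement (vspan n S)" using V.in_orthogonal_complement_span[OF S] by simp
  then show ?thesis using v unfolding V.orthogonal_complement_def by auto
qed

(* Removing from r its component along s leaves a vector orthogonal to s
   (for s = 0 the division by zero gives 0 and r is unchanged). *)
lemma remove_component_orthogonal:
  fixes r s :: "real vec"
  assumes r: "r \<in> carrier_vec n" and s: "s \<in> carrier_vec n"
  shows "(r - ((r \<bullet> s) / (s \<bullet> s)) \<cdot>\<^sub>v s) \<bullet> s = 0"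
proof (cases "s \<bullet> s = 0")
  case True
  then have "s = 0\<^sub>v n" using scalar_prod_self_eq_0 s by blast
  then show ?thesis using r by simp
next
  case False
  then show ?thesis using minus_scalar_prod_distrib[of r n _ s] r s by simp
qed

(* Orthogonal decomposition: every x splits as x = p + r with p in span ws and r
   orthogonal to ws.  Induction on ws, one Gram-Schmidt step per new vector. *)
lemma orthogonal_decomposition:
  fixes ws :: "real vec list"
  assumes "set ws \<subseteq> carrier_vec n" and "x \<in> carrier_vec n"
  shows "\<exists>p r. p \<in> vspan n (set ws) \<and> r \<in> carrier_vec n \<and> x = p + r \<and> (\<forall>w\<in>set ws. r \<bullet> w = 0)"
  using assms
proof (induct ws arbitrary: x)
  case Nil
  interpret V: vec_space "TYPE(real)" n .
  show ?case using Nil V.span_empty by (intro exI[of _ "0\<^sub>v n"] exI[of _ x]) auto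
next
  case (Cons w ws)
  interpret V: vec_space "TYPE(real)" n .
  let ?S = "set (w # ws)"
  have ws: "set ws \<subseteq> carrier_vec n" and w: "w \<in> carrier_vec n" and S: "?S \<subseteq> carrier_vec n"
    using Cons.prems by auto
  have mono: "vspan n (set ws) \<subseteq> vspan n ?S" using V.span_is_monotone[of "set ws" ?S] by auto
  obtain p r where p: "p \<in> vspan n (set ws)" and r: "r \<in> carrier_vec n" and xpr: "x = p + r"
    and r_perp: "\<forall>u\<in>set ws. r \<bullet> u = 0" using Cons.hyps[OF ws Cons.prems(2)] by blast
  obtain q s where q: "q \<in> vspan n (set ws)" and s: "s \<in> carrier_vec n" and wqs: "w = q + s"
    and s_perp: "\<forall>u\<in>set ws. s \<bullet> u = 0" using Cons.hyps[OF ws w] by blast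
  have pc: "p \<in> carrier_vec n" and qc: "q \<in> carrier_vec n" using p q ws V.span_closed by auto
  txt \<open>The new direction s = w - q lies in the enlarged span; removing from r its
    component along s yields the new residual.\<close>
  have s_span: "s \<in> vspan n ?S"
  proof -
    have "s = w + (-1) \<cdot>\<^sub>v q" using wqs qc s by (intro eq_vecI) auto
    moreover have "w \<in> vspan n ?S" using V.span_mem[OF S] by auto
    moreover have "(-1) \<cdot>\<^sub>v q \<in> vspan n ?S" using mono q qc w ws V.smult_in_span[OF S] by auto
    ultimately show ?thesis using V.span_add1[OF S] by auto
  qed
  define c where "c = (r \<bullet> s) / (s \<bullet> s)"
  define r' where "r' = r - c \<cdot>\<^sub>v s"
  have r'c: "r' \<in> carrier_vec n" unfolding r'_def using r s by simp
  have r'_u: "r' \<bullet> u = r \<bullet> u - c * (s \<bullet> u)" if "u \<in> carrier_vec n" for u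
    unfolding r'_def using minus_scalar_prod_distrib[of r n "c \<cdot>\<^sub>v s" u] r s that by simp
  have r'_s: "r' \<bullet> s = 0" unfolding r'_def c_def using remove_component_orthogonal[OF r s] .
  have r'_ws: "\<forall>u\<in>set ws. r' \<bullet> u = 0" using r'_u r_perp s_perp ws by auto
  have "r' \<bullet> w = r' \<bullet> q + r' \<bullet> s" unfolding wqs using scalar_prod_add_distrib[OF r'c qc s] .
  then have r'_w: "r' \<bullet> w = 0" using orthogonal_to_span[OF ws r'c r'_ws q] r'_s by simp
  have "p + c \<cdot>\<^sub>v s \<in> vspan n ?S" using V.span_add1[OF S] mono p V.smult_in_span[OF S s_span] by auto
  moreover have "x = (p + c \<cdot>\<^sub>v s) + r'" unfolding r'_def xpr using pc r s by (intro eq_vecI) auto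
  ultimately show ?case using r'c r'_ws r'_w by (intro exI[of _ "p + c \<cdot>\<^sub>v s"] exI[of _ r']) auto
qed

lemma transpose_mult_vec_zero_iff:
  fixes M :: "real mat"
  assumes M: "M \<in> carrier_mat n k" and x: "x \<in> carrier_vec n"
  shows "transpose_mat M *\<^sub>v x = 0\<^sub>v k \<longleftrightarrow> (\<forall>w\<in>set (cols M). x \<bullet> w = 0)"
proof -
  have entry: "(transpose_mat M *\<^sub>v x) $ j = x \<bullet> col M j" if "j < k" for j
    using M x that comm_scalar_prod[of "col M j" n x] by simp
  have "transpose_mat M *\<^sub>v x = 0\<^sub>v k \<longleftrightarrow> (\<forall>j<k. x \<bullet> col M j = 0)"
    using M entry by (auto simp: vec_eq_iff)
  also have "\<dots> \<longleftrightarrow> (\<forall>w\<in>set (cols M). x \<bullet> w = 0)" using M by (auto simp: cols_def)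
  finally show ?thesis .
qed

(* The nontrivial
   inclusion decomposes x = p + r with p in the range and r orthogonal to the
   columns; then r lies in the left kernel, so r . r = x . r = 0. *)
lemma range_iff_orthogonal_to_left_kernel:
  fixes M :: "real mat"
  assumes M: "M \<in> carrier_mat n k" and x: "x \<in> carrier_vec n"
  shows "(\<exists>z\<in>carrier_vec k. x = M *\<^sub>v z) \<longleftrightarrow> (\<forall>y\<in>mat_kernel (transpose_mat M). x \<bullet> y = 0)"
proof
  assume "\<exists>z\<in>carrier_vec k. x = M *\<^sub>v z"
  then obtain z where z: "z \<in> carrier_vec k" and xz: "x = M *\<^sub>v z" by blast
  show "\<forall>y\<in>mat_kernel (transpose_mat M). x \<bullet> y = 0"
  proof
    fix y assume "y \<in> mat_kernel (transpose_mat M)"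
    then have y: "y \<in> carrier_vec n" "transpose_mat M *\<^sub>v y = 0\<^sub>v k" using M by (auto simp: mat_kernel_def)
    have "x \<bullet> y = y \<bullet> (M *\<^sub>v z)" unfolding xz using comm_scalar_prod[of "M *\<^sub>v z" n y] M y z by simp
    also have "\<dots> = (transpose_mat M *\<^sub>v y) \<bullet> z" using transpose_vec_mult_scalar[OF M z y(1)] by simp
    finally show "x \<bullet> y = 0" using y(2) z by simp
  qed
next
  assume orth: "\<forall>y\<in>mat_kernel (transpose_mat M). x \<bullet> y = 0"
  interpret V: vec_space "TYPE(real)" n .
  have cs: "set (cols M) \<subseteq> carrier_vec n" using M cols_dim by blast
  obtain p r where p: "p \<in> vspan n (set (cols M))" and r: "r \<in> carrier_vec n" and xpr: "x = p + r"
    and r_perp: "\<forall>w\<in>set (cols M). r \<bullet> w = 0" using orthogonal_decomposition[OF cs x] by blast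
  have pc: "p \<in> carrier_vec n" using p cs V.span_closed by auto
  have "r \<in> mat_kernel (transpose_mat M)"
    using transpose_mult_vec_zero_iff[OF M r] r_perp r M by (simp add: mat_kernel_def)
  then have "x \<bullet> r = 0" using orth by blast
  moreover have "x \<bullet> r = r \<bullet> p + r \<bullet> r"
    unfolding xpr using add_scalar_prod_distrib[OF pc r r] comm_scalar_prod[OF pc r] by simp
  moreover have "r \<bullet> p = 0" using orthogonal_to_span[OF cs r r_perp p] .
  ultimately have "r = 0\<^sub>v n" using scalar_prod_self_eq_0[OF r] by simp
  then have "x = p" using xpr pc by simp
  then show "\<exists>z\<in>carrier_vec k. x = M *\<^sub>v z" using p span_cols_eq_range[OF M] by auto
qed

lemma kernel_of_nul_transpose:
  fixes B Y :: "real mat"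
  assumes B: "B \<in> carrier_mat n k" and nY: "is_nul (transpose_mat B) Y"
  shows "mat_kernel (transpose_mat Y) = {B *\<^sub>v z | z. z \<in> carrier_vec k}"
proof -
  interpret V: vec_space "TYPE(real)" n .
  have Y: "Y \<in> carrier_mat n (kernel_dim (transpose_mat B))"
    and spY: "vspan n (set (cols Y)) = mat_kernel (transpose_mat B)"
    using nY B unfolding is_nul_def by auto
  have cY: "set (cols Y) \<subseteq> carrier_vec n" using Y cols_dim by blast
  have "x \<in> mat_kernel (transpose_mat Y) \<longleftrightarrow> (\<exists>z\<in>carrier_vec k. x = B *\<^sub>v z)"
    if x: "x \<in> carrier_vec n" for x
  proof -
    have "x \<in> mat_kernel (transpose_mat Y) \<longleftrightarrow> (\<forall>w\<in>set (cols Y). x \<bullet> w = 0)"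
      using transpose_mult_vec_zero_iff[OF Y x] x Y by (simp add: mat_kernel_def)
    also have "\<dots> \<longleftrightarrow> (\<forall>y\<in>mat_kernel (transpose_mat B). x \<bullet> y = 0)"
      using orthogonal_to_span[OF cY x] V.span_mem[OF cY] spY by blast
    finally show ?thesis using range_iff_orthogonal_to_left_kernel[OF B x] by simp
  qed
  moreover have "mat_kernel (transpose_mat Y) \<subseteq> carrier_vec n" using Y by (auto simp: mat_kernel_def)
  moreover have "{B *\<^sub>v z | z. z \<in> carrier_vec k} \<subseteq> carrier_vec n" using B by auto
  ultimately show ?thesis by blast
qed

lemma mat_kernel_append_rows:
  fixes M1 M2 :: "real mat"
  assumes M1: "M1 \<in> carrier_mat r1 n" and M2: "M2 \<in> carrier_mat r2 n"
  shows "mat_kernel (M1 @\<^sub>r M2) = mat_kernel M1 \<inter> mat_kernel M2"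
proof -
  have M: "M1 @\<^sub>r M2 \<in> carrier_mat (r1 + r2) n" using carrier_append_rows[OF M1 M2] .
  have zero: "0\<^sub>v (r1 + r2) = (0\<^sub>v r1 :: real vec) @\<^sub>v 0\<^sub>v r2" by (intro eq_vecI) (auto simp: append_vec_def)
  have "(M1 @\<^sub>r M2) *\<^sub>v x = 0\<^sub>v (r1 + r2) \<longleftrightarrow> M1 *\<^sub>v x = 0\<^sub>v r1 \<and> M2 *\<^sub>v x = 0\<^sub>v r2"
    if x: "x \<in> carrier_vec n" for x
    unfolding mat_mult_append[OF M1 M2 x] zero by (rule append_vec_eq[of _ r1]) (use M1 x in auto)
  then show ?thesis unfolding mat_kernel[OF M] mat_kernel[OF M1] mat_kernel[OF M2] by auto
qed

lemma mat_kernel_single_row: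
  fixes C :: "real mat"
  assumes C: "C \<in> carrier_mat 1 n"
  shows "mat_kernel C = {x \<in> carrier_vec n. row C 0 \<bullet> x = 0}"
proof -
  have "C *\<^sub>v x = 0\<^sub>v 1 \<longleftrightarrow> row C 0 \<bullet> x = 0" for x
    using C by (auto simp: vec_eq_iff)
  then show ?thesis unfolding mat_kernel[OF C] by auto
qed

lemma is_nul_of_line:
  fixes M N :: "real mat" and v :: "real vec"
  assumes M: "M \<in> carrier_mat nr n" and nN: "is_nul M N"
    and v: "v \<in> carrier_vec n" "v \<noteq> 0\<^sub>v n" and ker: "mat_kernel M = {a \<cdot>\<^sub>v v | a. True}"
  shows "N \<in> carrier_mat n 1" and "\<exists>t. t \<noteq> 0 \<and> col N 0 = t \<cdot>\<^sub>v v"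
proof -
  interpret K: kernel nr n M by unfold_locales (rule M)
  have line: "mat_kernel M = vspan n {v}" using ker span_single[OF v(1)] by simp
  have "K.NC.lin_indpt {}" by (auto simp: K.NC.lin_dep_def)
  then have "K.NC.lin_indpt {v}" using K.NC.lin_dep_iff_in_span[of "{}" v] K.NC.span_empty v by auto
  moreover have vk: "{v} \<subseteq> mat_kernel M" using line K.NC.span_mem[of "{v}" v] v by auto
  ultimately have "K.basis {v}"
    unfolding K.Ker.basis_def using K.lindep_same[OF vk] K.span_same[OF vk] line vk by simp
  then have "kernel_dim M = 1" using K.Ker.dim_basis[of "{v}"] by simp
  then show N: "N \<in> carrier_mat n 1" using nN M unfolding is_nul_def by simp
  have colc: "col N 0 \<in> carrier_vec n" using N by (simp add: carrier_vecI)
  have "set (cols N) = {col N 0}" using N by (auto simp: cols_def)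
  then have spN: "vspan n {col N 0} = mat_kernel M" using nN M unfolding is_nul_def by simp
  have "col N 0 \<in> mat_kernel M" using spN K.NC.span_mem[of "{col N 0}"] colc by auto
  then obtain t where t: "col N 0 = t \<cdot>\<^sub>v v" using ker by blast
  have "v \<in> vspan n {col N 0}" using spN vk by simp
  then obtain a where "v = a \<cdot>\<^sub>v col N 0" using span_single[OF colc] by auto
  then have "v = a \<cdot>\<^sub>v (t \<cdot>\<^sub>v v)" using t by simp
  then have "t \<noteq> 0" using v by auto
  then show "\<exists>t. t \<noteq> 0 \<and> col N 0 = t \<cdot>\<^sub>v v" using t by blast
qed

(* U_k = unobs n A c k: the states whose first k outputs c.u, c.Au, ..., c.A^(k-1)u
   vanish.  The column spaces of the matrices X_i are images of these spaces. *)
definition unobs :: "nat \<Rightarrow> real mat \<Rightarrow> real vec \<Rightarrow> nat \<Rightarrow> real vec set" where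
  "unobs n A c k = {u \<in> carrier_vec n. \<forall>j<k. c \<bullet> ((A ^\<^sub>m j) *\<^sub>v u) = 0}"

lemma output_diff:
  fixes A :: "real mat"
  assumes A: "A \<in> carrier_mat n n" and c: "c \<in> carrier_vec n"
    and u: "u \<in> carrier_vec n" and x: "x \<in> carrier_vec n"
  shows "c \<bullet> ((A ^\<^sub>m j) *\<^sub>v (u - t \<cdot>\<^sub>v x)) = c \<bullet> ((A ^\<^sub>m j) *\<^sub>v u) - t * (c \<bullet> ((A ^\<^sub>m j) *\<^sub>v x))"
proof -
  have P: "A ^\<^sub>m j \<in> carrier_mat n n" using A by simp
  have "(A ^\<^sub>m j) *\<^sub>v (u - t \<cdot>\<^sub>v x) = (A ^\<^sub>m j) *\<^sub>v u - t \<cdot>\<^sub>v ((A ^\<^sub>m j) *\<^sub>v x)"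
    using mult_minus_distrib_mat_vec[OF P u, of "t \<cdot>\<^sub>v x"] mult_mat_vec[OF P x] x by simp
  then show ?thesis
    using scalar_prod_minus_distrib[OF c, of "(A ^\<^sub>m j) *\<^sub>v u" "t \<cdot>\<^sub>v ((A ^\<^sub>m j) *\<^sub>v x)"] c A by simp
qed

lemma output_smult:
  fixes A :: "real mat"
  assumes A: "A \<in> carrier_mat n n" and c: "c \<in> carrier_vec n" and x: "x \<in> carrier_vec n"
  shows "c \<bullet> ((A ^\<^sub>m j) *\<^sub>v (a \<cdot>\<^sub>v x)) = a * (c \<bullet> ((A ^\<^sub>m j) *\<^sub>v x))"
  using mult_mat_vec[OF pow_carrier_mat[OF A] x] c A by simp

lemma unobs_image_0:
  fixes A :: "real mat"
  assumes A: "A \<in> carrier_mat n n"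
  shows "(\<lambda>u. (A ^\<^sub>m 0) *\<^sub>v u) ` unobs n A c (Suc 0) = {x \<in> carrier_vec n. c \<bullet> x = 0}"
proof -
  have "(A ^\<^sub>m 0) *\<^sub>v u = u" if "u \<in> carrier_vec n" for u using A that by simp
  then show ?thesis unfolding unobs_def by force
qed

lemma unobs_image_Suc:
  fixes A :: "real mat"
  assumes A: "A \<in> carrier_mat n n"
  shows "{x \<in> carrier_vec n. c \<bullet> x = 0} \<inter> (\<lambda>v. A *\<^sub>v v) ` (\<lambda>u. (A ^\<^sub>m i) *\<^sub>v u) ` unobs n A c (Suc i)
    = (\<lambda>u. (A ^\<^sub>m Suc i) *\<^sub>v u) ` unobs n A c (Suc (Suc i))"
proof -
  have step: "A *\<^sub>v ((A ^\<^sub>m i) *\<^sub>v u) = (A ^\<^sub>m Suc i) *\<^sub>v u" if "u \<in> unobs n A c (Suc i)" for u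
    using pow_mat_mult_vec_Suc[OF A] that unfolding unobs_def by simp
  have last: "u \<in> unobs n A c (Suc (Suc i)) \<longleftrightarrow> u \<in> unobs n A c (Suc i) \<and> c \<bullet> ((A ^\<^sub>m Suc i) *\<^sub>v u) = 0" for u
    unfolding unobs_def using less_Suc_eq by auto
  show ?thesis
  proof (intro equalityI subsetI)
    fix x assume "x \<in> {x \<in> carrier_vec n. c \<bullet> x = 0} \<inter> (\<lambda>v. A *\<^sub>v v) ` (\<lambda>u. (A ^\<^sub>m i) *\<^sub>v u) ` unobs n A c (Suc i)"
    then obtain u where "u \<in> unobs n A c (Suc i)" "x = (A ^\<^sub>m Suc i) *\<^sub>v u" "c \<bullet> x = 0"
      using step by auto
    then show "x \<in> (\<lambda>u. (A ^\<^sub>m Suc i) *\<^sub>v u) ` unobs n A c (Suc (Suc i))" using last by blast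
  next
    fix x assume "x \<in> (\<lambda>u. (A ^\<^sub>m Suc i) *\<^sub>v u) ` unobs n A c (Suc (Suc i))"
    then obtain u where u: "u \<in> unobs n A c (Suc i)" "c \<bullet> ((A ^\<^sub>m Suc i) *\<^sub>v u) = 0"
      and x: "x = (A ^\<^sub>m Suc i) *\<^sub>v u" using last by blast
    have "x \<in> carrier_vec n" unfolding x by (rule pow_mat_mult_vec_carrier[OF A])
    moreover have "x \<in> (\<lambda>v. A *\<^sub>v v) ` (\<lambda>u. (A ^\<^sub>m i) *\<^sub>v u) ` unobs n A c (Suc i)"
      unfolding x step[OF u(1), symmetric] using u(1) by (intro imageI)
    moreover have "c \<bullet> x = 0" unfolding x by (rule u(2))
    ultimately show "x \<in> {x \<in> carrier_vec n. c \<bullet> x = 0} \<inter> (\<lambda>v. A *\<^sub>v v) ` (\<lambda>u. (A ^\<^sub>m i) *\<^sub>v u) ` unobs n A c (Suc i)"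
      by (intro IntI CollectI conjI)
  qed
qed

lemma nul_chain_kernels:
  fixes A C :: "real mat" and X Y :: "nat \<Rightarrow> real mat"
  assumes A: "A \<in> carrier_mat n n" and C: "C \<in> carrier_mat 1 n"
    and nX0: "is_nul C (X 0)"
    and nY: "\<And>i. 1 \<le> i \<Longrightarrow> i \<le> m \<Longrightarrow> is_nul (transpose_mat (A * X (i - 1))) (Y i)"
    and nX: "\<And>i. 1 \<le> i \<Longrightarrow> i \<le> m \<Longrightarrow> is_nul (C @\<^sub>r transpose_mat (Y i)) (X i)"
  shows "i \<le> m \<Longrightarrow> \<exists>M nr. M \<in> carrier_mat nr n \<and> is_nul M (X i)
           \<and> mat_kernel M = (\<lambda>u. (A ^\<^sub>m i) *\<^sub>v u) ` unobs n A (row C 0) (Suc i)"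
proof (induct i)
  case 0
  have "mat_kernel C = (\<lambda>u. (A ^\<^sub>m 0) *\<^sub>v u) ` unobs n A (row C 0) (Suc 0)"
    unfolding mat_kernel_single_row[OF C] unobs_image_0[OF A] ..
  then show ?case using C nX0 by blast
next
  case (Suc i)
  then obtain M nr where M: "M \<in> carrier_mat nr n" and nXi: "is_nul M (X i)"
    and kerM: "mat_kernel M = (\<lambda>u. (A ^\<^sub>m i) *\<^sub>v u) ` unobs n A (row C 0) (Suc i)" by auto
  define k where "k = kernel_dim M"
  have Xi: "X i \<in> carrier_mat n k" and spXi: "vspan n (set (cols (X i))) = mat_kernel M"
    using nXi M unfolding is_nul_def k_def by auto
  have B: "A * X i \<in> carrier_mat n k" using A Xi by simp
  have nYi: "is_nul (transpose_mat (A * X i)) (Y (Suc i))" using nY[of "Suc i"] Suc.prems by simp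
  define ky where "ky = kernel_dim (transpose_mat (A * X i))"
  have YT: "transpose_mat (Y (Suc i)) \<in> carrier_mat ky n" using nYi B A unfolding is_nul_def ky_def by simp
  define M' where "M' = C @\<^sub>r transpose_mat (Y (Suc i))"
  have M': "M' \<in> carrier_mat (1 + ky) n" unfolding M'_def using carrier_append_rows[OF C YT] .
  have range: "{(A * X i) *\<^sub>v z | z. z \<in> carrier_vec k} = (\<lambda>v. A *\<^sub>v v) ` mat_kernel M"
  proof -
    have "(A * X i) *\<^sub>v z = A *\<^sub>v (X i *\<^sub>v z)" if "z \<in> carrier_vec k" for z
      using A Xi that by (rule assoc_mult_mat_vec)
    then show ?thesis unfolding spXi[symmetric] span_cols_eq_range[OF Xi] Setcompr_eq_image image_image
      by (intro image_cong) auto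
  qed
  have "mat_kernel M' = (\<lambda>u. (A ^\<^sub>m Suc i) *\<^sub>v u) ` unobs n A (row C 0) (Suc (Suc i))"
    unfolding M'_def mat_kernel_append_rows[OF C YT] mat_kernel_single_row[OF C]
      kernel_of_nul_transpose[OF B nYi] range kerM by (rule unobs_image_Suc[OF A])
  moreover have "is_nul M' (X (Suc i))" unfolding M'_def using nX[of "Suc i"] Suc.prems by simp
  ultimately show ?case using M' by (intro exI[of _ M'] exI[of _ "1 + ky"] conjI)
qed

lemma obs_mat_carrier:
  fixes A C :: "real mat"
  assumes A: "A \<in> carrier_mat n n" and C: "C \<in> carrier_mat 1 n"
  shows "obs_mat n C A \<in> carrier_mat n n"
  unfolding obs_mat_def
  using mat_of_cols_carrier(1)[of n "map (\<lambda>j. col (transpose_mat (A ^\<^sub>m j) * transpose_mat C) 0) [0..<n]"]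
  by simp

lemma obs_mat_col:
  fixes A C :: "real mat"
  assumes A: "A \<in> carrier_mat n n" and C: "C \<in> carrier_mat 1 n" and j: "j < n"
  shows "col (obs_mat n C A) j = transpose_mat (A ^\<^sub>m j) *\<^sub>v row C 0"
proof -
  have "col (obs_mat n C A) j = col (transpose_mat (A ^\<^sub>m j) * transpose_mat C) 0"
    unfolding obs_mat_def using j A C by (subst col_mat_of_cols) (auto intro!: carrier_vecI)
  also have "\<dots> = transpose_mat (A ^\<^sub>m j) *\<^sub>v col (transpose_mat C) 0"
    using A C by (intro col_mult2[of _ n n _ 1]) auto
  finally show ?thesis using C by simp
qed

lemma observable_unobs_trivial:
  fixes A C :: "real mat"
  assumes A: "A \<in> carrier_mat n n" and C: "C \<in> carrier_mat 1 n"
    and rk: "vec_space.rank n (obs_mat n C A) = n"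
  shows "unobs n A (row C 0) n = {0\<^sub>v n}"
proof -
  define Ob where "Ob = obs_mat n C A"
  have c: "row C 0 \<in> carrier_vec n" using C by (simp add: row_def)
  note Ob = obs_mat_carrier[OF A C, folded Ob_def] and col_Ob = obs_mat_col[OF A C, folded Ob_def]
  have "det Ob \<noteq> 0" using vec_space.det_rank_iff[OF Ob] rk unfolding Ob_def by simp
  then have det: "det (transpose_mat Ob) \<noteq> 0" using det_transpose[OF Ob] by simp
  have "u = 0\<^sub>v n" if u: "u \<in> unobs n A (row C 0) n" for u
  proof -
    have uc: "u \<in> carrier_vec n" using u unfolding unobs_def by simp
    have "transpose_mat Ob *\<^sub>v u = 0\<^sub>v n"
    proof (rule eq_vecI)
      fix j assume "j < dim_vec (0\<^sub>v n :: real vec)"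
      then have j: "j < n" by simp
      have "(transpose_mat Ob *\<^sub>v u) $ j = (transpose_mat (A ^\<^sub>m j) *\<^sub>v row C 0) \<bullet> u"
        using Ob j col_Ob[OF j] by simp
      also have "\<dots> = row C 0 \<bullet> ((A ^\<^sub>m j) *\<^sub>v u)"
        using transpose_vec_mult_scalar[OF pow_carrier_mat[OF A] uc c] .
      finally show "(transpose_mat Ob *\<^sub>v u) $ j = 0\<^sub>v n $ j" using u j unfolding unobs_def by simp
    qed (use Ob in simp)
    then show ?thesis using det_0_iff_vec_prod_zero_field[of "transpose_mat Ob" n] Ob det uc by auto
  qed
  moreover have "0\<^sub>v n \<in> unobs n A (row C 0) n"
  proof -
    have "M *\<^sub>v 0\<^sub>v n = 0\<^sub>v n" if "M \<in> carrier_mat n n" for M :: "real mat" using that by auto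
    then show ?thesis unfolding unobs_def using A c by simp
  qed
  ultimately show ?thesis by blast
qed

(* Fact (2b): n-1 linear conditions always leave a nonzero state in U_(n-1). *)
lemma unobs_nontrivial:
  fixes A :: "real mat"
  assumes A: "A \<in> carrier_mat n n" and c: "c \<in> carrier_vec n" and n: "n \<ge> 1"
  shows "\<exists>x0. x0 \<in> unobs n A c (n - 1) \<and> x0 \<noteq> 0\<^sub>v n"
proof -
  define f where "f j = transpose_mat (A ^\<^sub>m j) *\<^sub>v c" for j
  have fc: "f j \<in> carrier_vec n" for j
    unfolding f_def by (rule mult_mat_vec_carrier[of _ n n]) (use A c in auto)
  define R where "R = mat\<^sub>r n n (\<lambda>i. if i = n - 1 then 0\<^sub>v n else f i)"
  have R: "R \<in> carrier_mat n n" unfolding R_def by simp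
  have "det R = 0" unfolding R_def by (rule det_row_0) (use n fc in auto)
  then obtain v where v: "v \<in> carrier_vec n" "v \<noteq> 0\<^sub>v n" "R *\<^sub>v v = 0\<^sub>v n"
    using det_0_iff_vec_prod_zero_field[OF R] by blast
  have "c \<bullet> ((A ^\<^sub>m j) *\<^sub>v v) = 0" if j: "j < n - 1" for j
  proof -
    have "row R j = f j" unfolding R_def using j fc[of j] by (subst row_mat_of_row_fun) auto
    then have "(R *\<^sub>v v) $ j = f j \<bullet> v" using R j by simp
    also have "\<dots> = c \<bullet> ((A ^\<^sub>m j) *\<^sub>v v)"
      unfolding f_def using transpose_vec_mult_scalar[OF pow_carrier_mat[OF A] v(1) c] .
    finally show ?thesis using v(3) j by simp
  qed
  then show ?thesis using v unfolding unobs_def by blast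
qed

lemma unobs_line:
  fixes A :: "real mat"
  assumes A: "A \<in> carrier_mat n n" and c: "c \<in> carrier_vec n" and n: "n \<ge> 1"
    and obs: "unobs n A c n = {0\<^sub>v n}"
    and x0: "x0 \<in> unobs n A c (n - 1)" "x0 \<noteq> 0\<^sub>v n"
  shows "c \<bullet> ((A ^\<^sub>m (n - 1)) *\<^sub>v x0) \<noteq> 0" and "unobs n A c (n - 1) = {a \<cdot>\<^sub>v x0 | a. True}"
proof -
  define \<gamma> where "\<gamma> = c \<bullet> ((A ^\<^sub>m (n - 1)) *\<^sub>v x0)"
  have x0c: "x0 \<in> carrier_vec n" using x0 unfolding unobs_def by simp
  have split: "j < n \<longleftrightarrow> j < n - 1 \<or> j = n - 1" for j using n by linarith
  show \<gamma>: "\<gamma> \<noteq> 0"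
  proof
    assume "\<gamma> = 0"
    then have "x0 \<in> unobs n A c n" using x0(1) split unfolding unobs_def \<gamma>_def by auto
    then show False using obs x0(2) by blast
  qed
  have "u = ((c \<bullet> ((A ^\<^sub>m (n - 1)) *\<^sub>v u)) / \<gamma>) \<cdot>\<^sub>v x0" if u: "u \<in> unobs n A c (n - 1)" for u
  proof -
    define t where "t = (c \<bullet> ((A ^\<^sub>m (n - 1)) *\<^sub>v u)) / \<gamma>"
    have uc: "u \<in> carrier_vec n" using u unfolding unobs_def by simp
    have "c \<bullet> ((A ^\<^sub>m j) *\<^sub>v (u - t \<cdot>\<^sub>v x0)) = 0" if j: "j < n" for j
    proof (cases "j < n - 1")
      case True
      then show ?thesis using u x0(1) output_diff[OF A c uc x0c, of j t] unfolding unobs_def by simp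
    next
      case False
      then have "j = n - 1" using j by simp
      then show ?thesis using output_diff[OF A c uc x0c, of j t] \<gamma> unfolding t_def \<gamma>_def by simp
    qed
    then have "u - t \<cdot>\<^sub>v x0 \<in> unobs n A c n" using uc x0c unfolding unobs_def by simp
    then have "u - t \<cdot>\<^sub>v x0 = 0\<^sub>v n" using obs by blast
    then have "u = t \<cdot>\<^sub>v x0"
    proof (intro eq_vecI)
      fix i assume "u - t \<cdot>\<^sub>v x0 = 0\<^sub>v n" and "i < dim_vec (t \<cdot>\<^sub>v x0)"
      then show "u $ i = (t \<cdot>\<^sub>v x0) $ i" using uc x0c by (metis carrier_vecD index_minus_vec(1) index_smult_vec(1,2) index_zero_vec(1) right_minus_eq)
    qed (use uc x0c in simp)
    then show ?thesis unfolding t_def .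
  qed
  moreover have "a \<cdot>\<^sub>v x0 \<in> unobs n A c (n - 1)" for a
    using x0(1) output_smult[OF A c x0c] x0c unfolding unobs_def by simp
  ultimately show "unobs n A c (n - 1) = {a \<cdot>\<^sub>v x0 | a. True}" unfolding \<gamma>_def by blast
qed

lemma scalar_prod_mult_vec_cols:
  fixes M :: "real mat"
  assumes M: "M \<in> carrier_mat n k" and c: "c \<in> carrier_vec n" and a: "a \<in> carrier_vec k"
  shows "c \<bullet> (M *\<^sub>v a) = (\<Sum>j<k. a $ j * (c \<bullet> col M j))"
proof -
  have "c \<bullet> (M *\<^sub>v a) = (transpose_mat M *\<^sub>v c) \<bullet> a" using transpose_vec_mult_scalar[OF M a c] by simp
  also have "\<dots> = (\<Sum>j<k. a $ j * (c \<bullet> col M j))"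
    using M a c unfolding scalar_prod_def[of "transpose_mat M *\<^sub>v c"]
    by (intro sum.cong) (auto simp: comm_scalar_prod[of _ n] lessThan_atLeast0)
  finally show ?thesis .
qed

lemma image_line:
  fixes M :: "real mat"
  assumes M: "M \<in> carrier_mat n n" and x: "x \<in> carrier_vec n"
  shows "(\<lambda>u. M *\<^sub>v u) ` {a \<cdot>\<^sub>v x | a. True} = {a \<cdot>\<^sub>v (M *\<^sub>v x) | a. True}"
proof (intro equalityI subsetI)
  fix y assume "y \<in> (\<lambda>u. M *\<^sub>v u) ` {a \<cdot>\<^sub>v x | a. True}"
  then obtain a where "y = M *\<^sub>v (a \<cdot>\<^sub>v x)" by blast
  then show "y \<in> {a \<cdot>\<^sub>v (M *\<^sub>v x) | a. True}" using mult_mat_vec[OF M x] by blast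
next
  fix y assume "y \<in> {a \<cdot>\<^sub>v (M *\<^sub>v x) | a. True}"
  then obtain a where "y = M *\<^sub>v (a \<cdot>\<^sub>v x)" using mult_mat_vec[OF M x] by auto
  then show "y \<in> (\<lambda>u. M *\<^sub>v u) ` {a \<cdot>\<^sub>v x | a. True}" by blast
qed

lemma shift_pow_mult_vec:
  fixes F :: "real mat" and e :: "nat \<Rightarrow> real vec"
  assumes F: "F \<in> carrier_mat n n" and e: "\<And>j. e j \<in> carrier_vec n"
    and step: "\<And>j. j < n - 1 \<Longrightarrow> F *\<^sub>v e j = e (Suc j)" and last: "F *\<^sub>v e (n - 1) = 0\<^sub>v n"
    and j: "j < n"
  shows "(F ^\<^sub>m m) *\<^sub>v e j = (if j + m \<le> n - 1 then e (j + m) else 0\<^sub>v n)"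
proof (induct m)
  case 0
  have "j \<le> n - 1" using j by simp
  then show ?case using e[of j] F by simp
next
  case (Suc m)
  have zero: "F *\<^sub>v 0\<^sub>v n = 0\<^sub>v n" using F by auto
  have "(F ^\<^sub>m Suc m) *\<^sub>v e j = F *\<^sub>v ((F ^\<^sub>m m) *\<^sub>v e j)" using pow_mat_mult_vec_Suc[OF F e] .
  also have "\<dots> = (if j + Suc m \<le> n - 1 then e (j + Suc m) else 0\<^sub>v n)"
    using Suc step[of "j + m"] last zero by (cases "j + m < n - 1"; cases "j + m = n - 1") auto
  finally show ?case .
qed

lemma zero_if_zero_on_invertible_cols:
  fixes P K :: "real mat"
  assumes P: "P \<in> carrier_mat n n" and K: "K \<in> carrier_mat n n" and det: "det K \<noteq> 0"
    and vanish: "\<And>j. j < n \<Longrightarrow> P *\<^sub>v col K j = 0\<^sub>v n"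
  shows "P = 0\<^sub>m n n"
proof -
  have PK: "P * K = 0\<^sub>m n n"
  proof (rule eq_matI)
    fix i j assume "i < dim_row (0\<^sub>m n n :: real mat)" "j < dim_col (0\<^sub>m n n :: real mat)"
    then have i: "i < n" and j: "j < n" by auto
    have "(P * K) $$ (i, j) = (P *\<^sub>v col K j) $ i" using P K i j by simp
    then show "(P * K) $$ (i, j) = 0\<^sub>m n n $$ (i, j)" using vanish[OF j] i j by simp
  qed (use P K in auto)
  obtain Ki where Ki: "Ki \<in> carrier_mat n n" and KKi: "K * Ki = 1\<^sub>m n"
    using det_non_zero_imp_unit[OF K det] unfolding Units_def by (auto simp: ring_mat_def)
  have "P = (P * K) * Ki" using assoc_mult_mat[OF P K Ki] KKi P by simp
  then show ?thesis unfolding PK using Ki by simp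
qed

lemma last_nonzero_entry:
  fixes a :: "real vec"
  assumes a: "a \<in> carrier_vec n" and nz: "a \<noteq> 0\<^sub>v n"
  obtains m where "m < n" "a $ m \<noteq> 0" "\<And>j. j < n \<Longrightarrow> m < j \<Longrightarrow> a $ j = 0"
proof -
  obtain j0 where j0: "j0 < n" "a $ j0 \<noteq> 0" using a nz by (auto simp: vec_eq_iff)
  define m where "m = (GREATEST j. j < n \<and> a $ j \<noteq> 0)"
  have "m < n \<and> a $ m \<noteq> 0" unfolding m_def by (rule GreatestI_nat[of _ j0 n]) (use j0 in auto)
  moreover have "a $ j = 0" if "j < n" "m < j" for j
    using Greatest_le_nat[of "\<lambda>j. j < n \<and> a $ j \<noteq> 0" j n] that unfolding m_def[symmetric] by auto
  ultimately show ?thesis using that by blast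
qed

(* The Krylov vectors e_j = A^j x0 (j < n) of a state x0 whose first n-1 outputs
   vanish but whose n-th output does not are linearly independent: in a vanishing
   combination, apply A^(n-1-m) for the largest index m with a_m <> 0 and read off
   the output, which is a_m * gamma. *)
lemma krylov_mat_invertible:
  fixes A :: "real mat"
  assumes A: "A \<in> carrier_mat n n" and c: "c \<in> carrier_vec n"
    and x0: "x0 \<in> unobs n A c (n - 1)" and \<gamma>: "c \<bullet> ((A ^\<^sub>m (n - 1)) *\<^sub>v x0) \<noteq> 0"
  defines "K \<equiv> mat_of_cols n (map (\<lambda>j. (A ^\<^sub>m j) *\<^sub>v x0) [0..<n])"
  shows "K \<in> carrier_mat n n" and "\<And>j. j < n \<Longrightarrow> col K j = (A ^\<^sub>m j) *\<^sub>v x0" and "det K \<noteq> 0"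
proof -
  define e where "e j = (A ^\<^sub>m j) *\<^sub>v x0" for j
  have x0c: "x0 \<in> carrier_vec n" using x0 unfolding unobs_def by simp
  show K: "K \<in> carrier_mat n n"
    unfolding K_def using mat_of_cols_carrier(1)[of n "map (\<lambda>j. (A ^\<^sub>m j) *\<^sub>v x0) [0..<n]"] by simp
  show colK: "col K j = (A ^\<^sub>m j) *\<^sub>v x0" if j: "j < n" for j
    unfolding K_def using j A by (subst col_mat_of_cols) auto
  have "a = 0\<^sub>v n" if a: "a \<in> carrier_vec n" and Ka: "K *\<^sub>v a = 0\<^sub>v n" for a
  proof (rule ccontr)
    assume "a \<noteq> 0\<^sub>v n"
    then obtain m where m: "m < n \<and> a $ m \<noteq> 0" and above_m: "\<And>j. j < n \<Longrightarrow> m < j \<Longrightarrow> a $ j = 0"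
      using last_nonzero_entry[OF a] by metis
    define p where "p = n - 1 - m"
    define P where "P = A ^\<^sub>m p * K"
    have P: "P \<in> carrier_mat n n" unfolding P_def using mult_carrier_mat[OF pow_carrier_mat[OF A] K] .
    have colP: "col P j = e (p + j)" if j: "j < n" for j
      unfolding P_def e_def using A K j colK[OF j] pow_mat_mult_vec_add[OF A x0c] by (subst col_mult2) auto
    have "c \<bullet> (P *\<^sub>v a) = (\<Sum>j<n. a $ j * (c \<bullet> col P j))" by (rule scalar_prod_mult_vec_cols[OF P c a])
    also have "\<dots> = (\<Sum>j<n. if j = m then a $ m * (c \<bullet> e (n - 1)) else 0)"
    proof (rule sum.cong[OF refl])
      fix j assume "j \<in> {..<n}"
      then have j: "j < n" by simp
      consider "j < m" | "j = m" | "m < j" by linarith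
      then show "a $ j * (c \<bullet> col P j) = (if j = m then a $ m * (c \<bullet> e (n - 1)) else 0)"
      proof cases
        case 1
        then have "p + j < n - 1" unfolding p_def using m by linarith
        then show ?thesis using x0 1 colP[OF j] unfolding unobs_def e_def by simp
      qed (use colP[OF j] m above_m[OF j] p_def in auto)
    qed
    also have "\<dots> = a $ m * (c \<bullet> e (n - 1))" using m by simp
    finally have "c \<bullet> (P *\<^sub>v a) = a $ m * (c \<bullet> e (n - 1))" .
    moreover have "P *\<^sub>v a = 0\<^sub>v n"
      unfolding P_def using assoc_mult_mat_vec[OF pow_carrier_mat[OF A] K a] Ka A by auto
    ultimately show False using m \<gamma> c unfolding e_def by simp
  qed
  then show "det K \<noteq> 0" using det_0_iff_vec_prod_zero_field[OF K] by blast
qed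

(* Fact (3): subtracting from A the rank-one term that sends the Krylov vector
   e_(n-1) = A^(n-1) x0 to 0 gives a nilpotent matrix. *)
lemma krylov_update_nilpotent:
  fixes A F :: "real mat"
  assumes A: "A \<in> carrier_mat n n" and c: "c \<in> carrier_vec n"
    and x0: "x0 \<in> unobs n A c (n - 1)" and \<gamma>: "c \<bullet> ((A ^\<^sub>m (n - 1)) *\<^sub>v x0) \<noteq> 0"
    and F: "F \<in> carrier_mat n n"
    and F_apply: "\<And>u. u \<in> carrier_vec n \<Longrightarrow>
      F *\<^sub>v u = A *\<^sub>v u - ((c \<bullet> u) / (c \<bullet> ((A ^\<^sub>m (n - 1)) *\<^sub>v x0))) \<cdot>\<^sub>v ((A ^\<^sub>m n) *\<^sub>v x0)"
    and n: "n \<ge> 1"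
  shows "F ^\<^sub>m n = 0\<^sub>m n n"
proof -
  define e where "e j = (A ^\<^sub>m j) *\<^sub>v x0" for j
  have x0c: "x0 \<in> carrier_vec n" using x0 unfolding unobs_def by simp
  have e: "e j \<in> carrier_vec n" for j unfolding e_def using A by simp
  have Ae: "A *\<^sub>v e j = e (Suc j)" for j unfolding e_def using pow_mat_mult_vec_Suc[OF A x0c] by simp
  have en: "e n = e (Suc (n - 1))" using n by simp
  have F_e: "F *\<^sub>v e j = e (Suc j) - ((c \<bullet> e j) / (c \<bullet> e (n - 1))) \<cdot>\<^sub>v e n" for j
    using F_apply[OF e] Ae unfolding e_def by simp
  have step: "F *\<^sub>v e j = e (Suc j)" if "j < n - 1" for j
    using F_e[of j] x0 that e[of "Suc j"] e[of n] unfolding unobs_def e_def by auto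
  have last: "F *\<^sub>v e (n - 1) = 0\<^sub>v n" using F_e[of "n - 1"] \<gamma> e[of n] en unfolding e_def by simp
  note K = krylov_mat_invertible[OF A c x0 \<gamma>]
  show ?thesis
  proof (rule zero_if_zero_on_invertible_cols[OF pow_carrier_mat[OF F] K(1) K(3)])
    fix j assume j: "j < n"
    have "\<not> j + n \<le> n - 1" using n by simp
    then show "(F ^\<^sub>m n) *\<^sub>v col (mat_of_cols n (map (\<lambda>j. (A ^\<^sub>m j) *\<^sub>v x0) [0..<n])) j = 0\<^sub>v n"
      using K(2)[OF j] shift_pow_mult_vec[OF F e step last j, of n] unfolding e_def by simp
  qed
qed

lemma rank_one_update_mult_vec:
  fixes A L C :: "real mat"
  assumes A: "A \<in> carrier_mat n n" and L: "L \<in> carrier_mat n 1" and C: "C \<in> carrier_mat 1 n"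
    and u: "u \<in> carrier_vec n"
  shows "(A - L * C) *\<^sub>v u = A *\<^sub>v u - (row C 0 \<bullet> u) \<cdot>\<^sub>v col L 0"
proof -
  have Cu: "C *\<^sub>v u = vec 1 (\<lambda>_. row C 0 \<bullet> u)" using C u by (intro eq_vecI) auto
  have "(L * C) *\<^sub>v u = L *\<^sub>v (C *\<^sub>v u)" using L C u by (intro assoc_mult_mat_vec) auto
  also have "\<dots> = (row C 0 \<bullet> u) \<cdot>\<^sub>v col L 0" unfolding Cu using single_col_mult_vec[OF L] by simp
  finally show ?thesis using minus_mult_distrib_mat_vec[OF A _ u, of "L * C"] L C by simp
qed

lemma observer_gain:
  fixes A C Xl :: "real mat"
  assumes n: "n \<ge> 2" and A: "A \<in> carrier_mat n n" and C: "C \<in> carrier_mat 1 n"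
    and x0: "x0 \<in> unobs n A (row C 0) (n - 1)" and \<gamma>: "row C 0 \<bullet> ((A ^\<^sub>m (n - 1)) *\<^sub>v x0) \<noteq> 0"
    and Xl: "Xl \<in> carrier_mat n 1" and t: "t \<noteq> 0" and col_Xl: "col Xl 0 = t \<cdot>\<^sub>v ((A ^\<^sub>m (n - 2)) *\<^sub>v x0)"
  shows "let Lpre = A * Xl;
             L = (1 / (C * Lpre) $$ (0, 0)) \<cdot>\<^sub>m (A * Lpre)
         in Lpre \<in> carrier_mat n 1 \<and> Lpre \<noteq> 0\<^sub>m n 1 \<and> (C * Lpre) $$ (0, 0) \<noteq> 0
            \<and> nilpotent_mat (A - L * C)"
proof -
  define c where "c = row C 0"
  define e where "e j = (A ^\<^sub>m j) *\<^sub>v x0" for j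
  define Lpre where "Lpre = A * Xl"
  define L where "L = (1 / (C * Lpre) $$ (0, 0)) \<cdot>\<^sub>m (A * Lpre)"
  have x0c: "x0 \<in> carrier_vec n" using x0 unfolding unobs_def by simp
  have Ae: "A *\<^sub>v e j = e (Suc j)" for j unfolding e_def using pow_mat_mult_vec_Suc[OF A x0c] by simp
  have e: "e j \<in> carrier_vec n" for j unfolding e_def using A by simp
  have shift: "Suc (n - 2) = n - 1" "Suc (n - 1) = n" using n by auto
  have Lpre: "Lpre \<in> carrier_mat n 1" unfolding Lpre_def using A Xl by simp
  have col_Lpre: "col Lpre 0 = t \<cdot>\<^sub>v e (n - 1)"
    unfolding Lpre_def using col_mult2[OF A Xl, of 0] col_Xl mult_mat_vec[OF A e] Ae[of "n - 2"]
    unfolding e_def shift by simp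
  have CL: "(C * Lpre) $$ (0, 0) = t * (c \<bullet> e (n - 1))"
    using C Lpre col_Lpre e row_carrier[of C 0] unfolding c_def by simp
  have CL_nz: "(C * Lpre) $$ (0, 0) \<noteq> 0" using CL t \<gamma> unfolding c_def e_def by simp
  have Lpre_nz: "Lpre \<noteq> 0\<^sub>m n 1" using CL_nz C by (auto simp: scalar_prod_def)
  have L: "L \<in> carrier_mat n 1" unfolding L_def using A Lpre by simp
  have "col (A * Lpre) 0 = t \<cdot>\<^sub>v e n"
    using col_mult2[OF A Lpre, of 0] col_Lpre mult_mat_vec[OF A e] Ae[of "n - 1"] unfolding shift by simp
  then have col_L: "col L 0 = (1 / (c \<bullet> e (n - 1))) \<cdot>\<^sub>v e n"
    unfolding L_def CL using col_smult[of 0 "A * Lpre"] A Lpre t by (simp add: smult_smult_assoc)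
  have "L * C \<in> carrier_mat n n" using L C by simp
  then have F: "A - L * C \<in> carrier_mat n n" by (rule minus_carrier_mat)
  have "(A - L * C) ^\<^sub>m n = 0\<^sub>m n n"
  proof (rule krylov_update_nilpotent[OF A _ x0 \<gamma> F _ ])
    fix u :: "real vec" assume u: "u \<in> carrier_vec n"
    show "(A - L * C) *\<^sub>v u = A *\<^sub>v u - ((row C 0 \<bullet> u) / (row C 0 \<bullet> ((A ^\<^sub>m (n - 1)) *\<^sub>v x0))) \<cdot>\<^sub>v ((A ^\<^sub>m n) *\<^sub>v x0)"
      using rank_one_update_mult_vec[OF A L C u] col_L unfolding c_def e_def by (simp add: smult_smult_assoc)
  qed (use C n in auto)
  then have "nilpotent_mat (A - L * C)" unfolding nilpotent_mat_def using F L C by auto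
  then show ?thesis unfolding Let_def Lpre_def[symmetric] L_def[symmetric] using Lpre Lpre_nz CL_nz by simp
qed

theorem mainTheorem10:
  fixes n :: nat and A C :: "real mat" and X Y :: "nat \<Rightarrow> real mat"
  assumes "n \<ge> 2"
    and "A \<in> carrier_mat n n" and "C \<in> carrier_mat 1 n"
    and "vec_space.rank n (obs_mat n C A) = n"
    and "is_nul C (X 0)"
    and "\<And>i. 1 \<le> i \<Longrightarrow> i \<le> n - 2 \<Longrightarrow> is_nul (transpose_mat (A * X (i - 1))) (Y i)"
    and "\<And>i. 1 \<le> i \<Longrightarrow> i \<le> n - 2 \<Longrightarrow> is_nul (C @\<^sub>r transpose_mat (Y i)) (X i)"
  shows "let Lpre = A * X (n - 2);
             L = (1 / (C * Lpre) $$ (0, 0)) \<cdot>\<^sub>m (A * Lpre)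
         in Lpre \<in> carrier_mat n 1 \<and> Lpre \<noteq> 0\<^sub>m n 1 \<and> (C * Lpre) $$ (0, 0) \<noteq> 0
            \<and> nilpotent_mat (A - L * C)"
proof -
  note n = assms(1) and A = assms(2) and C = assms(3)
  define c where "c = row C 0"
  have c: "c \<in> carrier_vec n" unfolding c_def using C by (simp add: row_def)
  have obs: "unobs n A c n = {0\<^sub>v n}" unfolding c_def using observable_unobs_trivial[OF A C assms(4)] .
  obtain x0 where x0: "x0 \<in> unobs n A c (n - 1)" "x0 \<noteq> 0\<^sub>v n" using unobs_nontrivial[OF A c] n by auto
  have x0c: "x0 \<in> carrier_vec n" using x0 unfolding unobs_def by simp
  have \<gamma>: "c \<bullet> ((A ^\<^sub>m (n - 1)) *\<^sub>v x0) \<noteq> 0" and line: "unobs n A c (n - 1) = {a \<cdot>\<^sub>v x0 | a. True}"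
    using unobs_line[OF A c _ obs x0] n by auto
  txt \<open>The null space defining X_(n-2) is the line through v = A^(n-2) x0.\<close>
  obtain M nr where M: "M \<in> carrier_mat nr n" and nX: "is_nul M (X (n - 2))"
    and kerM: "mat_kernel M = (\<lambda>u. (A ^\<^sub>m (n - 2)) *\<^sub>v u) ` unobs n A c (Suc (n - 2))"
    using nul_chain_kernels[OF A C assms(5-7) le_refl] unfolding c_def by blast
  define v where "v = (A ^\<^sub>m (n - 2)) *\<^sub>v x0"
  have shift: "Suc (n - 2) = n - 1" using n by simp
  have ker_line: "mat_kernel M = {a \<cdot>\<^sub>v v | a. True}"
    unfolding kerM shift line v_def by (rule image_line[OF pow_carrier_mat[OF A] x0c])
  have "A *\<^sub>v v = (A ^\<^sub>m (n - 1)) *\<^sub>v x0"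
    unfolding v_def using pow_mat_mult_vec_Suc[OF A x0c, of "n - 2"] shift by simp
  moreover have "A *\<^sub>v 0\<^sub>v n = 0\<^sub>v n" using A by auto
  ultimately have "v \<noteq> 0\<^sub>v n" using \<gamma> c by (metis scalar_prod_right_zero)
  then obtain t where "X (n - 2) \<in> carrier_mat n 1" "t \<noteq> 0" "col (X (n - 2)) 0 = t \<cdot>\<^sub>v v"
    using is_nul_of_line[OF M nX _ _ ker_line] A unfolding v_def by auto
  then show ?thesis using observer_gain[OF n A C] x0(1) \<gamma> unfolding c_def v_def by blast
qed

end
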